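(* Under the CRFE, $(\hat{\boldsymbol{\tau}}'-\boldsymbol{\tau}',\hat{\boldsymbol{\theta}}_x')'$ has mean zero, and for $1\le h\le H$, $\mathrm{Cov}(\hat{\boldsymbol{\tau}}-\boldsymbol{\tau},\hat{\boldsymbol{\theta}}_x[h])=\boldsymbol{W}_{\tau x}[h]=2^{-2(K-1)}\sum_{q=1}^Qn_q^{-1}(\boldsymbol{b}_q\boldsymbol{c}_q[h]')\otimes\boldsymbol{S}_{q,x}$, $\mathrm{Cov}(\hat{\boldsymbol{\theta}}_x[h])=\boldsymbol{W}_{xx}[h]=2^{-2(K-1)}\sum_{q=1}^Qn_q^{-1}(\boldsymbol{c}_q[h]\boldsymbol{c}_q[h]')\otimes\boldsymbol{S}_{xx}$, and $\mathrm{Cov}(\hat{\boldsymbol{\theta}}_x[h],\hat{\boldsymbol{\theta}}_x[\tilde h])=\boldsymbol{0}$ for $h\ne\tilde h$.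
   Context: Setup ($2^K$ factorial experiment, finite population). $K\ge1$ two-level factors, $Q=2^K$ treatment combinations $q=1,\dots,Q$; combination $q$ sets factor $k$ at $\iota_k(q)\in\{-1,+1\}$, bijectively onto $\{-1,+1\}^K$. $F=Q-1$ factorial effects, one per nonempty $A\subseteq\{1,\dots,K\}$, enumerated $f=1,\dots,F$, with $g_{fq}=\prod_{k\in A}\iota_k(q)$; $\boldsymbol{b}_q=(g_{1q},\dots,g_{Fq})'$. Units $i=1,\dots,n$ have fixed potential outcomes $Y_i(q)$ and covariates $\boldsymbol{x}_i\in\mathbb{R}^L$; $\bar Y(q),\bar{\boldsymbol{x}}$ means; $\boldsymbol{\tau}=2^{-(K-1)}\sum_q\boldsymbol{b}_q\bar Y(q)$. Finite-population (co)variances with divisor $n-1$: $\boldsymbol{S}_{xx}$ of $\boldsymbol{x}$; $\boldsymbol{S}_{q,x}$ between $Y(q)$ and $\boldsymbol{x}$. CRFE: fixed $n_q\ge1$, $\sum n_q=n$; $\boldsymbol{Z}$ uniform over assignments with $n_q$ units in combination $q$; $\hat{\bar Y}(q),\hat{\bar{\boldsymbol{x}}}(q)$ group-$q$ means of observed outcomes $Y_i(Z_i)$ and covariates; $\hat{\boldsymbol{\tau}}=2^{-(K-1)}\sum_q\boldsymbol{b}_q\hat{\bar Y}(q)$. Tiers: partition $\{1,\dots,F\}$ into disjoint nonempty $\mathcal{F}_1,\dots,\mathcal{F}_H$, $\mathcal{F}_{\overline h}=\bigcup_{l\le h}\mathcal{F}_l$. $\tilde{\boldsymbol{B}}=2^{-2(K-1)}\sum_qn_q^{-1}\boldsymbol{b}_q\boldsymbol{b}_q'$;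 $\boldsymbol{b}_q[\mathcal{I}]$ is the subvector with indices in $\mathcal{I}$ and $\tilde{\boldsymbol{B}}[\mathcal{I},\mathcal{J}]$ the submatrix. $\boldsymbol{c}_q[1]=\boldsymbol{b}_q[\mathcal{F}_1]$, and for $h\ge2$, $\boldsymbol{c}_q[h]=\boldsymbol{b}_q[\mathcal{F}_h]-\tilde{\boldsymbol{B}}[\mathcal{F}_h,\mathcal{F}_{\overline{h-1}}]\{\tilde{\boldsymbol{B}}[\mathcal{F}_{\overline{h-1}},\mathcal{F}_{\overline{h-1}}]\}^{-1}\boldsymbol{b}_q[\mathcal{F}_{\overline{h-1}}]$. $\hat{\boldsymbol{\theta}}_x[h]=2^{-(K-1)}\sum_q\boldsymbol{c}_q[h]\otimes\hat{\bar{\boldsymbol{x}}}(q)$ and $\hat{\boldsymbol{\theta}}_x=(\hat{\boldsymbol{\theta}}_x[1]',\dots,\hat{\boldsymbol{\theta}}_x[H]')'$. *)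

theory Defs
  imports Complex_Main "Jordan_Normal_Form.Matrix" "Jordan_Normal_Form.DL_Submatrix"
          "Jordan_Normal_Form.Gauss_Jordan_Elimination"
begin

text \<open>Conventions (all indices start at 0):
  treatment combinations q < Q = 2^K; factors k < K; factorial effects f < F = Q - 1;
  units i < n; covariates l < L; tiers h < H (tier h here is tier h+1 of the paper).
  iota q k is the level of factor k in combination q; eff f is the (nonempty) factor
  set A of effect f.  Y i q = Y_i(q), x i l = l-th covariate of unit i, nq q = n_q.\<close>

definition gcoef :: "(nat \<Rightarrow> nat \<Rightarrow> real) \<Rightarrow> (nat \<Rightarrow> nat set) \<Rightarrow> nat \<Rightarrow> nat \<Rightarrow> real" where
  "gcoef iota eff f q = (\<Prod>k\<in>eff f. iota q k)"

definition bvec :: "nat \<Rightarrow> (nat \<Rightarrow> nat \<Rightarrow> real) \<Rightarrow> (nat \<Rightarrow> nat set) \<Rightarrow> nat \<Rightarrow> real vec" where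
  "bvec K iota eff q = vec (2^K - 1) (\<lambda>f. gcoef iota eff f q)"

definition subvec :: "'a vec \<Rightarrow> nat set \<Rightarrow> 'a vec" where
  "subvec v I = vec (card {i. i < dim_vec v \<and> i \<in> I}) (\<lambda>j. v $ pick I j)"

definition Btil :: "nat \<Rightarrow> (nat \<Rightarrow> nat \<Rightarrow> real) \<Rightarrow> (nat \<Rightarrow> nat set) \<Rightarrow> (nat \<Rightarrow> nat) \<Rightarrow> real mat" where
  "Btil K iota eff nq = mat (2^K - 1) (2^K - 1)
     (\<lambda>(f, f'). (1 / 2 ^ (2 * (K - 1))) *
        (\<Sum>q<2^K. (1 / real (nq q)) * gcoef iota eff f q * gcoef iota eff f' q))"

text \<open>Union of tiers 0..h-1 (the paper's F_{overline{h-1}} for paper-tier h).\<close>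
definition prevtiers :: "(nat \<Rightarrow> nat set) \<Rightarrow> nat \<Rightarrow> nat set" where
  "prevtiers tier h = (\<Union>l<h. tier l)"

definition matinv :: "real mat \<Rightarrow> real mat" where
  "matinv A = the (mat_inverse A)"

definition cvec :: "nat \<Rightarrow> (nat \<Rightarrow> nat \<Rightarrow> real) \<Rightarrow> (nat \<Rightarrow> nat set) \<Rightarrow> (nat \<Rightarrow> nat)
                    \<Rightarrow> (nat \<Rightarrow> nat set) \<Rightarrow> nat \<Rightarrow> nat \<Rightarrow> real vec" where
  "cvec K iota eff nq tier q h =
     (if h = 0 then subvec (bvec K iota eff q) (tier 0)
      else subvec (bvec K iota eff q) (tier h)
           - (submatrix (Btil K iota eff nq) (tier h) (prevtiers tier h)
              * matinv (submatrix (Btil K iota eff nq) (prevtiers tier h) (prevtiers tier h)))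
             *\<^sub>v subvec (bvec K iota eff q) (prevtiers tier h))"

definition kron :: "real mat \<Rightarrow> real mat \<Rightarrow> real mat" where
  "kron A B = mat (dim_row A * dim_row B) (dim_col A * dim_col B)
     (\<lambda>(i, j). A $$ (i div dim_row B, j div dim_col B) * B $$ (i mod dim_row B, j mod dim_col B))"

definition kronv :: "real vec \<Rightarrow> real vec \<Rightarrow> real vec" where
  "kronv u v = vec (dim_vec u * dim_vec v) (\<lambda>i. u $ (i div dim_vec v) * v $ (i mod dim_vec v))"

definition outer :: "real vec \<Rightarrow> real vec \<Rightarrow> real mat" where
  "outer u v = mat (dim_vec u) (dim_vec v) (\<lambda>(i, j). u $ i * v $ j)"

definition msum :: "nat \<Rightarrow> nat \<Rightarrow> (nat \<Rightarrow> real mat) \<Rightarrow> nat set \<Rightarrow> real mat" where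
  "msum r c M S = mat r c (\<lambda>ij. \<Sum>q\<in>S. M q $$ ij)"

definition vsum :: "nat \<Rightarrow> (nat \<Rightarrow> real vec) \<Rightarrow> nat set \<Rightarrow> real vec" where
  "vsum d v S = vec d (\<lambda>i. \<Sum>q\<in>S. v q $ i)"

definition Ybar :: "nat \<Rightarrow> (nat \<Rightarrow> nat \<Rightarrow> real) \<Rightarrow> nat \<Rightarrow> real" where
  "Ybar n Y q = (\<Sum>i<n. Y i q) / real n"

definition xbar :: "nat \<Rightarrow> (nat \<Rightarrow> nat \<Rightarrow> real) \<Rightarrow> nat \<Rightarrow> real" where
  "xbar n x l = (\<Sum>i<n. x i l) / real n"

definition Sqx :: "nat \<Rightarrow> nat \<Rightarrow> (nat \<Rightarrow> nat \<Rightarrow> real) \<Rightarrow> (nat \<Rightarrow> nat \<Rightarrow> real) \<Rightarrow> nat \<Rightarrow> real mat" where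
  "Sqx n L Y x q = mat 1 L (\<lambda>(_, l).
     (\<Sum>i<n. (Y i q - Ybar n Y q) * (x i l - xbar n x l)) / (real n - 1))"

definition Sxx :: "nat \<Rightarrow> nat \<Rightarrow> (nat \<Rightarrow> nat \<Rightarrow> real) \<Rightarrow> real mat" where
  "Sxx n L x = mat L L (\<lambda>(l, l').
     (\<Sum>i<n. (x i l - xbar n x l) * (x i l' - xbar n x l')) / (real n - 1))"

text \<open>Set of CRFE assignments: z i is the treatment combination of unit i.\<close>
definition assignments :: "nat \<Rightarrow> nat \<Rightarrow> (nat \<Rightarrow> nat) \<Rightarrow> (nat \<Rightarrow> nat) set" where
  "assignments n Q nq = {z \<in> {0..<n} \<rightarrow>\<^sub>E {0..<Q}. \<forall>q<Q. card {i. i < n \<and> z i = q} = nq q}"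

definition Ex :: "(nat \<Rightarrow> nat) set \<Rightarrow> ((nat \<Rightarrow> nat) \<Rightarrow> real) \<Rightarrow> real" where
  "Ex \<Omega> X = (\<Sum>z\<in>\<Omega>. X z) / real (card \<Omega>)"

definition Evec :: "(nat \<Rightarrow> nat) set \<Rightarrow> nat \<Rightarrow> ((nat \<Rightarrow> nat) \<Rightarrow> real vec) \<Rightarrow> real vec" where
  "Evec \<Omega> d X = vec d (\<lambda>i. Ex \<Omega> (\<lambda>z. X z $ i))"

definition Cov :: "(nat \<Rightarrow> nat) set \<Rightarrow> nat \<Rightarrow> nat \<Rightarrow> ((nat \<Rightarrow> nat) \<Rightarrow> real vec)
                    \<Rightarrow> ((nat \<Rightarrow> nat) \<Rightarrow> real vec) \<Rightarrow> real mat" where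
  "Cov \<Omega> d1 d2 X V = mat d1 d2 (\<lambda>(i, j).
     Ex \<Omega> (\<lambda>z. (X z $ i - Ex \<Omega> (\<lambda>w. X w $ i)) * (V z $ j - Ex \<Omega> (\<lambda>w. V w $ j))))"

definition Yhat :: "nat \<Rightarrow> (nat \<Rightarrow> nat) \<Rightarrow> (nat \<Rightarrow> nat \<Rightarrow> real) \<Rightarrow> (nat \<Rightarrow> nat) \<Rightarrow> nat \<Rightarrow> real" where
  "Yhat n nq Y z q = (\<Sum>i\<in>{i. i < n \<and> z i = q}. Y i (z i)) / real (nq q)"

definition xhat :: "nat \<Rightarrow> nat \<Rightarrow> (nat \<Rightarrow> nat) \<Rightarrow> (nat \<Rightarrow> nat \<Rightarrow> real) \<Rightarrow> (nat \<Rightarrow> nat) \<Rightarrow> nat \<Rightarrow> real vec" where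
  "xhat n L nq x z q = vec L (\<lambda>l. (\<Sum>i\<in>{i. i < n \<and> z i = q}. x i l) / real (nq q))"

definition tau :: "nat \<Rightarrow> (nat \<Rightarrow> nat \<Rightarrow> real) \<Rightarrow> (nat \<Rightarrow> nat set) \<Rightarrow> nat \<Rightarrow> (nat \<Rightarrow> nat \<Rightarrow> real) \<Rightarrow> real vec" where
  "tau K iota eff n Y = vsum (2^K - 1) (\<lambda>q. (Ybar n Y q / 2 ^ (K - 1)) \<cdot>\<^sub>v bvec K iota eff q) {..<2^K}"

definition tauhat :: "nat \<Rightarrow> (nat \<Rightarrow> nat \<Rightarrow> real) \<Rightarrow> (nat \<Rightarrow> nat set) \<Rightarrow> nat \<Rightarrow> (nat \<Rightarrow> nat)
                      \<Rightarrow> (nat \<Rightarrow> nat \<Rightarrow> real) \<Rightarrow> (nat \<Rightarrow> nat) \<Rightarrow> real vec" where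
  "tauhat K iota eff n nq Y z = vsum (2^K - 1) (\<lambda>q. (Yhat n nq Y z q / 2 ^ (K - 1)) \<cdot>\<^sub>v bvec K iota eff q) {..<2^K}"

definition thetahat :: "nat \<Rightarrow> (nat \<Rightarrow> nat \<Rightarrow> real) \<Rightarrow> (nat \<Rightarrow> nat set) \<Rightarrow> nat \<Rightarrow> nat \<Rightarrow> (nat \<Rightarrow> nat)
                        \<Rightarrow> (nat \<Rightarrow> nat set) \<Rightarrow> (nat \<Rightarrow> nat \<Rightarrow> real) \<Rightarrow> nat \<Rightarrow> (nat \<Rightarrow> nat) \<Rightarrow> real vec" where
  "thetahat K iota eff n L nq tier x h z = vsum (card (tier h) * L)
     (\<lambda>q. (1 / 2 ^ (K - 1)) \<cdot>\<^sub>v kronv (cvec K iota eff nq tier q h) (xhat n L nq x z q)) {..<2^K}"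

definition thetahat_all :: "nat \<Rightarrow> (nat \<Rightarrow> nat \<Rightarrow> real) \<Rightarrow> (nat \<Rightarrow> nat set) \<Rightarrow> nat \<Rightarrow> nat \<Rightarrow> (nat \<Rightarrow> nat)
                        \<Rightarrow> (nat \<Rightarrow> nat set) \<Rightarrow> nat \<Rightarrow> (nat \<Rightarrow> nat \<Rightarrow> real) \<Rightarrow> (nat \<Rightarrow> nat) \<Rightarrow> real vec" where
  "thetahat_all K iota eff n L nq tier H x z =
     foldr (\<lambda>h v. thetahat K iota eff n L nq tier x h z @\<^sub>v v) [0..<H] (vec 0 (\<lambda>_. 0))"

definition W_taux :: "nat \<Rightarrow> (nat \<Rightarrow> nat \<Rightarrow> real) \<Rightarrow> (nat \<Rightarrow> nat set) \<Rightarrow> nat \<Rightarrow> nat \<Rightarrow> (nat \<Rightarrow> nat)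
                        \<Rightarrow> (nat \<Rightarrow> nat set) \<Rightarrow> (nat \<Rightarrow> nat \<Rightarrow> real) \<Rightarrow> (nat \<Rightarrow> nat \<Rightarrow> real) \<Rightarrow> nat \<Rightarrow> real mat" where
  "W_taux K iota eff n L nq tier Y x h = msum (2^K - 1) (card (tier h) * L)
     (\<lambda>q. (1 / (2 ^ (2 * (K - 1)) * real (nq q))) \<cdot>\<^sub>m
           kron (outer (bvec K iota eff q) (cvec K iota eff nq tier q h)) (Sqx n L Y x q)) {..<2^K}"

definition W_xx :: "nat \<Rightarrow> (nat \<Rightarrow> nat \<Rightarrow> real) \<Rightarrow> (nat \<Rightarrow> nat set) \<Rightarrow> nat \<Rightarrow> nat \<Rightarrow> (nat \<Rightarrow> nat)
                        \<Rightarrow> (nat \<Rightarrow> nat set) \<Rightarrow> (nat \<Rightarrow> nat \<Rightarrow> real) \<Rightarrow> nat \<Rightarrow> real mat" where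
  "W_xx K iota eff n L nq tier x h = msum (card (tier h) * L) (card (tier h) * L)
     (\<lambda>q. (1 / (2 ^ (2 * (K - 1)) * real (nq q))) \<cdot>\<^sub>m
           kron (outer (cvec K iota eff nq tier q h) (cvec K iota eff nq tier q h)) (Sxx n L x)) {..<2^K}"

end

theory Submission
  imports Defs "Jordan_Normal_Form.Determinant"
begin

text \<open>
  Up to an additive constant, every coordinate of \<open>tauhat - tau\<close> and of \<open>thetahat h\<close> is a
  contrast \<open>\<Sum>\<^sub>q u\<^sub>q Yhat(q)\<close> of group means. For \<open>thetahat h\<close> the response is a covariate and
  \<open>\<Sum>\<^sub>q u\<^sub>q = 0\<close>, because each entry of \<open>c\<^sub>q[h]\<close> is a combination of factorial contrasts.
  By exchangeability of the units, a unit lies in group \<open>q\<close> with probability \<open>n\<^sub>q / n\<close>, and two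
  distinct units lie in groups \<open>q, q'\<close> with probability \<open>n\<^sub>q (n\<^sub>q' - [q = q']) / (n (n - 1))\<close>.
  Hence the contrasts are unbiased, and two of them have covariance \<open>\<Sum>\<^sub>q u\<^sub>q v\<^sub>q S\<^sub>q / n\<^sub>q\<close> as
  soon as one coefficient vector sums to zero; this gives \<open>W_taux\<close> and \<open>W_xx\<close>. Between tiers
  \<open>h \<noteq> h'\<close> the covariance is \<open>S\<^sub>x\<^sub>x\<close> times \<open>\<Sum>\<^sub>q c\<^sub>q[h] c\<^sub>q[h']' / n\<^sub>q\<close>, which vanishes because
  \<open>c\<^sub>q[h]\<close> is the residual of the weighted least-squares projection of \<open>b\<^sub>q[F\<^sub>h]\<close> onto the
  contrasts of the earlier tiers; the Gram matrix of this projection is invertible because the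
  factorial contrasts are orthogonal.
\<close>

section \<open>Complete randomization\<close>

definition covar ::
    "(nat \<Rightarrow> nat) set \<Rightarrow> ((nat \<Rightarrow> nat) \<Rightarrow> real) \<Rightarrow> ((nat \<Rightarrow> nat) \<Rightarrow> real) \<Rightarrow> real"
  where "covar \<Omega> X V = Ex \<Omega> (\<lambda>z. (X z - Ex \<Omega> X) * (V z - Ex \<Omega> V))"

definition fpcov :: "nat \<Rightarrow> (nat \<Rightarrow> real) \<Rightarrow> (nat \<Rightarrow> real) \<Rightarrow> real"
  where "fpcov n a b = (\<Sum>i<n. (a i - (\<Sum>k<n. a k) / n) * (b i - (\<Sum>k<n. b k) / n)) / (real n - 1)"

lemma index_Cov:
  "i < d1 \<Longrightarrow> j < d2 \<Longrightarrow> Cov \<Omega> d1 d2 X V $$ (i, j) = covar \<Omega> (\<lambda>z. X z $ i) (\<lambda>z. V z $ j)"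
  by (simp add: Cov_def covar_def)

lemma fpcov_scale: "fpcov n (\<lambda>i. u * a i) (\<lambda>i. v * b i) = u * v * fpcov n a b"
  unfolding fpcov_def
  by (simp add: sum_distrib_left[symmetric] mult_ac right_diff_distrib[symmetric] flip: times_divide_eq_right)

lemma Sqx_index: "l < L \<Longrightarrow> Sqx n L Y x q $$ (0, l) = fpcov n (\<lambda>i. Y i q) (\<lambda>i. x i l)"
  by (simp add: Sqx_def fpcov_def Ybar_def xbar_def)

lemma Sxx_index: "l < L \<Longrightarrow> l' < L \<Longrightarrow> Sxx n L x $$ (l, l') = fpcov n (\<lambda>i. x i l) (\<lambda>i. x i l')"
  by (simp add: Sxx_def fpcov_def xbar_def)

lemma Ex_cong: "(\<And>z. z \<in> \<Omega> \<Longrightarrow> X z = V z) \<Longrightarrow> Ex \<Omega> X = Ex \<Omega> V"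
  unfolding Ex_def by (metis sum.cong)

lemma Ex_const: "finite \<Omega> \<Longrightarrow> \<Omega> \<noteq> {} \<Longrightarrow> Ex \<Omega> (\<lambda>_. c) = c"
  by (simp add: Ex_def)

lemma Ex_diff: "Ex \<Omega> (\<lambda>z. X z - V z) = Ex \<Omega> X - Ex \<Omega> V"
  by (simp add: Ex_def sum_subtractf diff_divide_distrib)

lemma Ex_cmult: "Ex \<Omega> (\<lambda>z. c * X z) = c * Ex \<Omega> X"
  by (simp add: Ex_def sum_distrib_left)

lemma Ex_sum: "Ex \<Omega> (\<lambda>z. \<Sum>a\<in>A. X a z) = (\<Sum>a\<in>A. Ex \<Omega> (X a))"
  unfolding Ex_def by (subst sum.swap) (simp add: sum_divide_distrib)

lemma covar_diff_const_left:
  assumes "finite \<Omega>" "\<Omega> \<noteq> {}"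
  shows "covar \<Omega> (\<lambda>z. X z - a) V = covar \<Omega> X V"
  using assms by (simp add: covar_def Ex_diff Ex_const)

lemma Evec_append:
  assumes "\<And>z. dim_vec (X z) = d1" and "\<And>z. dim_vec (V z) = d2"
  shows "Evec \<Omega> (d1 + d2) (\<lambda>z. X z @\<^sub>v V z) = Evec \<Omega> d1 X @\<^sub>v Evec \<Omega> d2 V"
  using assms by (intro eq_vecI) (simp_all add: Evec_def)

lemma dim_foldr_append:
  assumes "\<And>h. h \<in> set hs \<Longrightarrow> dim_vec (X h) = d h"
  shows "dim_vec (foldr (\<lambda>h v. X h @\<^sub>v v) hs (vec 0 (\<lambda>_. 0))) = (\<Sum>h\<leftarrow>hs. d h)"
  using assms by (induction hs) simp_all

lemma Evec_foldr_append_zero: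
  assumes dim: "\<And>h z. h \<in> set hs \<Longrightarrow> dim_vec (X h z) = d h"
    and zero: "\<And>h. h \<in> set hs \<Longrightarrow> Evec \<Omega> (d h) (X h) = 0\<^sub>v (d h)"
  shows "Evec \<Omega> (\<Sum>h\<leftarrow>hs. d h) (\<lambda>z. foldr (\<lambda>h v. X h z @\<^sub>v v) hs (vec 0 (\<lambda>_. 0)))
    = 0\<^sub>v (\<Sum>h\<leftarrow>hs. d h)"
  using assms
proof (induction hs)
  case Nil
  show ?case
    by (rule eq_vecI) (simp_all add: Evec_def)
next
  case (Cons h hs)
  have "Evec \<Omega> (\<Sum>h\<leftarrow>h # hs. d h) (\<lambda>z. foldr (\<lambda>h v. X h z @\<^sub>v v) (h # hs) (vec 0 (\<lambda>_. 0)))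
      = Evec \<Omega> (d h) (X h)
        @\<^sub>v Evec \<Omega> (\<Sum>h\<leftarrow>hs. d h) (\<lambda>z. foldr (\<lambda>h v. X h z @\<^sub>v v) hs (vec 0 (\<lambda>_. 0)))"
  proof -
    have "dim_vec (foldr (\<lambda>h v. X h z @\<^sub>v v) hs (vec 0 (\<lambda>_. 0))) = (\<Sum>h\<leftarrow>hs. d h)" for z
      using Cons.prems(1) by (intro dim_foldr_append) simp
    then show ?thesis
      using Cons.prems(1) by (simp add: Evec_append)
  qed
  also have "\<dots> = 0\<^sub>v (d h) @\<^sub>v 0\<^sub>v (\<Sum>h\<leftarrow>hs. d h)"
    using Cons by simp
  also have "\<dots> = 0\<^sub>v (\<Sum>h\<leftarrow>h # hs. d h)"
    by (intro eq_vecI) simp_all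
  finally show ?case .
qed

lemma finite_assignments: "finite (assignments n Q c)"
  by (rule finite_subset[of _ "{0..<n} \<rightarrow>\<^sub>E {0..<Q}"]) (auto simp: assignments_def finite_PiE)

lemma assignments_nonempty: "assignments (\<Sum>q<Q. c q) Q c \<noteq> {}"
proof (induction Q)
  case 0
  have "(\<lambda>_. undefined) \<in> assignments 0 0 c" by (auto simp: assignments_def)
  then show ?case by auto
next
  case (Suc Q)
  define N where "N = (\<Sum>q<Q. c q)"
  from Suc obtain z where z: "z \<in> assignments N Q c" unfolding N_def by blast
  define z' where "z' i = (if i < N then z i else if i < N + c Q then Q else undefined)" for i
  have "z' \<in> {0..<N + c Q} \<rightarrow>\<^sub>E {0..<Suc Q}"
    using z by (fastforce simp: z'_def assignments_def PiE_def Pi_def extensional_def)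
  moreover have "card {i. i < N + c Q \<and> z' i = q} = c q" if "q < Suc Q" for q
  proof (cases "q < Q")
    case True
    then have "{i. i < N + c Q \<and> z' i = q} = {i. i < N \<and> z i = q}" by (auto simp: z'_def)
    with True z show ?thesis by (simp add: assignments_def)
  next
    case False
    with that have "q = Q" by simp
    moreover have "{i. i < N + c Q \<and> z' i = Q} = {N..<N + c Q}"
      using z by (auto simp: z'_def assignments_def)
    ultimately show ?thesis by simp
  qed
  ultimately have "z' \<in> assignments (N + c Q) (Suc Q) c" by (simp add: assignments_def)
  then show ?case by (auto simp: N_def)
qed

lemma assignments_comp_permutes:
  assumes p: "p permutes {0..<n}" and z: "z \<in> assignments n Q c"
  shows "z \<circ> p \<in> assignments n Q c"
proof -
  have p_in: "p i < n \<longleftrightarrow> i < n" for i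
    using permutes_in_image[OF p] by simp
  have "z \<circ> p \<in> {0..<n} \<rightarrow>\<^sub>E {0..<Q}"
    using z p_in permutes_not_in[OF p] by (auto simp: assignments_def PiE_def Pi_def extensional_def)
  moreover have "card {i. i < n \<and> z (p i) = q} = c q" if "q < Q" for q
  proof -
    have "p ` {i. i < n \<and> z (p i) = q} = {i. i < n \<and> z i = q}"
    proof (intro equalityI subsetI)
      fix i assume "i \<in> {i. i < n \<and> z i = q}"
      moreover have "p (inv_into UNIV p i) = i"
        by (rule permutes_inverses(1)[OF p])
      ultimately have "inv_into UNIV p i \<in> {i. i < n \<and> z (p i) = q}"
        using p_in[of "inv_into UNIV p i"] by simp
      then show "i \<in> p ` {i. i < n \<and> z (p i) = q}"
        using \<open>p (inv_into UNIV p i) = i\<close> by (metis image_eqI)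
    qed (use p_in in auto)
    moreover have "inj_on p {i. i < n \<and> z (p i) = q}"
      using permutes_inj[OF p] by (simp add: inj_on_def inj_def)
    ultimately have "card {i. i < n \<and> z (p i) = q} = card {i. i < n \<and> z i = q}"
      using card_image by fastforce
    then show ?thesis using z that by (simp add: assignments_def)
  qed
  ultimately show ?thesis by (simp add: assignments_def)
qed

lemma Ex_assignments_comp_permutes:
  assumes p: "p permutes {0..<n}"
  shows "Ex (assignments n Q c) (\<lambda>z. X (z \<circ> p)) = Ex (assignments n Q c) X"
proof -
  have "bij_betw (\<lambda>z. z \<circ> p) (assignments n Q c) (assignments n Q c)"
  proof (rule bij_betw_byWitness[where f' = "\<lambda>z. z \<circ> inv_into UNIV p"])
    show "\<forall>z\<in>assignments n Q c. z \<circ> p \<circ> inv_into UNIV p = z"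
      "\<forall>z\<in>assignments n Q c. z \<circ> inv_into UNIV p \<circ> p = z"
      using permutes_inv_o[OF p] by (simp_all add: o_assoc[symmetric])
    show "(\<lambda>z. z \<circ> p) ` assignments n Q c \<subseteq> assignments n Q c"
      "(\<lambda>z. z \<circ> inv_into UNIV p) ` assignments n Q c \<subseteq> assignments n Q c"
      using assignments_comp_permutes[OF p] assignments_comp_permutes[OF permutes_inv[OF p]] by auto
  qed
  then have "(\<Sum>z\<in>assignments n Q c. X (z \<circ> p)) = sum X (assignments n Q c)"
    by (rule sum.reindex_bij_betw)
  then show ?thesis
    by (simp add: Ex_def)
qed

lemma sum_units_by_group:
  fixes f :: "nat \<Rightarrow> 'a :: semiring_1"
  assumes z: "z \<in> assignments n Q c"
  shows "(\<Sum>i<n. f (z i)) = (\<Sum>q<Q. of_nat (c q) * f q)"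
proof -
  have "(\<Sum>i<n. f (z i)) = (\<Sum>q<Q. \<Sum>i\<in>{i. i \<in> {..<n} \<and> z i = q}. f (z i))"
    using z by (intro sum.group[symmetric]) (auto simp: assignments_def)
  also have "\<dots> = (\<Sum>q<Q. of_nat (c q) * f q)"
  proof (rule sum.cong[OF refl])
    fix q assume "q \<in> {..<Q}"
    then have "card {i. i \<in> {..<n} \<and> z i = q} = c q"
      using z by (simp add: assignments_def)
    then show "(\<Sum>i\<in>{i. i \<in> {..<n} \<and> z i = q}. f (z i)) = of_nat (c q) * f q"
      by simp
  qed
  finally show ?thesis .
qed

lemma sum_Yhat:
  assumes z: "z \<in> assignments n Q c"
  shows "(\<Sum>q<Q. Yhat n c \<alpha> z q) = (\<Sum>i<n. \<alpha> i (z i) / c (z i))"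
proof -
  have "(\<Sum>q<Q. Yhat n c \<alpha> z q) = (\<Sum>q<Q. \<Sum>i\<in>{i. i \<in> {..<n} \<and> z i = q}. \<alpha> i (z i) / c (z i))"
    by (intro sum.cong refl) (auto simp: Yhat_def sum_divide_distrib intro!: sum.cong)
  also have "\<dots> = (\<Sum>i<n. \<alpha> i (z i) / c (z i))"
    using z by (intro sum.group) (auto simp: assignments_def)
  finally show ?thesis .
qed

lemma Yhat_scale: "Yhat n c (\<lambda>i q. u q * y i q) z q = u q * Yhat n c y z q"
proof -
  have "(\<Sum>i\<in>{i. i < n \<and> z i = q}. u (z i) * y i (z i)) = (\<Sum>i\<in>{i. i < n \<and> z i = q}. u q * y i (z i))"
    by (rule sum.cong) simp_all
  then show ?thesis
    by (simp add: Yhat_def sum_distrib_left)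
qed

lemma Ybar_scale: "Ybar n (\<lambda>i q. u q * y i q) q = u q * Ybar n y q"
  by (simp add: Ybar_def sum_distrib_left)

locale crfe =
  fixes n Q :: nat and nq :: "nat \<Rightarrow> nat"
  assumes nq_pos: "\<And>q. q < Q \<Longrightarrow> nq q \<ge> 1"
    and nq_sum: "(\<Sum>q<Q. nq q) = n"
    and two_units: "n \<ge> 2"
begin

abbreviation \<Omega> :: "(nat \<Rightarrow> nat) set" where "\<Omega> \<equiv> assignments n Q nq"

lemma finite_\<Omega>: "finite \<Omega>"
  by (rule finite_assignments)

lemma \<Omega>_nonempty: "\<Omega> \<noteq> {}"
  using assignments_nonempty[of nq Q] by (simp add: nq_sum)

lemma nq_nonzero: "q < Q \<Longrightarrow> nq q \<noteq> 0"
  using nq_pos[of q] by simp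

lemma Ex_unit_value:
  fixes f :: "nat \<Rightarrow> real"
  assumes i: "i < n"
  shows "Ex \<Omega> (\<lambda>z. f (z i)) = (\<Sum>q<Q. nq q * f q) / n"
proof -
  have same: "Ex \<Omega> (\<lambda>z. f (z j)) = Ex \<Omega> (\<lambda>z. f (z i))" if "j < n" for j
    using Ex_assignments_comp_permutes[OF permutes_swap_id[of i "{0..<n}" j], where X = "\<lambda>z. f (z j)"] i that
    by simp
  have "n * Ex \<Omega> (\<lambda>z. f (z i)) = (\<Sum>j<n. Ex \<Omega> (\<lambda>z. f (z j)))"
    using same by simp
  also have "\<dots> = Ex \<Omega> (\<lambda>z. \<Sum>j<n. f (z j))"
    by (rule Ex_sum[symmetric])
  also have "\<dots> = Ex \<Omega> (\<lambda>_. \<Sum>q<Q. nq q * f q)"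
    by (rule Ex_cong) (rule sum_units_by_group)
  also have "\<dots> = (\<Sum>q<Q. nq q * f q)"
    by (rule Ex_const[OF finite_\<Omega> \<Omega>_nonempty])
  finally show ?thesis
    using two_units by (simp add: field_simps)
qed

lemma Ex_unit_pair:
  fixes f g :: "nat \<Rightarrow> real"
  assumes i: "i < n" and j: "j < n" and ij: "i \<noteq> j"
  shows "Ex \<Omega> (\<lambda>z. f (z i) * g (z j))
    = ((\<Sum>q<Q. nq q * f q) * (\<Sum>q<Q. nq q * g q) - (\<Sum>q<Q. nq q * f q * g q)) / (n * (n - 1))"
proof -
  \<comment> \<open>By exchangeability every unit other than \<open>i\<close> contributes the same, and together they
     hold \<open>n\<^sub>q\<close> units in group \<open>q\<close>, minus unit \<open>i\<close> itself.\<close>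
  let ?others = "{..<n} - {i}"
  have same: "Ex \<Omega> (\<lambda>z. f (z i) * g (z k)) = Ex \<Omega> (\<lambda>z. f (z i) * g (z j))" if k: "k \<in> ?others" for k
    using Ex_assignments_comp_permutes[OF permutes_swap_id[of j "{0..<n}" k], where X = "\<lambda>z. f (z i) * g (z k)"]
      i j ij k
    by simp
  have "(n - 1) * Ex \<Omega> (\<lambda>z. f (z i) * g (z j)) = (\<Sum>k\<in>?others. Ex \<Omega> (\<lambda>z. f (z i) * g (z k)))"
    using same i two_units by (simp add: card_Diff_singleton)
  also have "\<dots> = Ex \<Omega> (\<lambda>z. f (z i) * (\<Sum>k\<in>?others. g (z k)))"
    by (simp add: Ex_sum sum_distrib_left)
  also have "\<dots> = Ex \<Omega> (\<lambda>z. (\<Sum>q<Q. nq q * g q) * f (z i) - f (z i) * g (z i))"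
  proof (rule Ex_cong)
    fix z assume z: "z \<in> \<Omega>"
    have others: "(\<Sum>k\<in>?others. g (z k)) = (\<Sum>q<Q. nq q * g q) - g (z i)"
      using sum_units_by_group[OF z, of g] i by (simp add: sum_diff1)
    show "f (z i) * (\<Sum>k\<in>?others. g (z k)) = (\<Sum>q<Q. nq q * g q) * f (z i) - f (z i) * g (z i)"
      unfolding others by (simp add: algebra_simps)
  qed
  also have "\<dots> = ((\<Sum>q<Q. nq q * g q) * (\<Sum>q<Q. nq q * f q) - (\<Sum>q<Q. nq q * f q * g q)) / n"
    by (simp add: Ex_diff Ex_cmult Ex_unit_value[OF i, of f] Ex_unit_value[OF i, of "\<lambda>q. f q * g q"]
        diff_divide_distrib mult.assoc)
  finally show ?thesis
    using two_units by (simp add: field_simps)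
qed

lemma Ex_unit_pair_centered:
  fixes f g :: "nat \<Rightarrow> real"
  assumes i: "i < n" and j: "j < n" and g: "(\<Sum>q<Q. nq q * g q) = 0"
  shows "Ex \<Omega> (\<lambda>z. f (z i) * g (z j))
    = (if i = j then 1 / n else - 1 / (n * (n - 1))) * (\<Sum>q<Q. nq q * f q * g q)"
proof (cases "i = j")
  case True
  then show ?thesis
    using Ex_unit_value[OF i, of "\<lambda>q. f q * g q"] by (simp add: mult.assoc)
next
  case False
  then show ?thesis
    using Ex_unit_pair[OF i j False] g by simp
qed

lemma Ex_sum_Yhat: "Ex \<Omega> (\<lambda>z. \<Sum>q<Q. Yhat n nq \<alpha> z q) = (\<Sum>q<Q. Ybar n \<alpha> q)"
proof -
  have "Ex \<Omega> (\<lambda>z. \<Sum>q<Q. Yhat n nq \<alpha> z q) = Ex \<Omega> (\<lambda>z. \<Sum>i<n. \<alpha> i (z i) / nq (z i))"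
    by (rule Ex_cong) (rule sum_Yhat)
  also have "\<dots> = (\<Sum>i<n. Ex \<Omega> (\<lambda>z. \<alpha> i (z i) / nq (z i)))"
    by (rule Ex_sum)
  also have "\<dots> = (\<Sum>i<n. (\<Sum>q<Q. \<alpha> i q) / n)"
  proof (rule sum.cong[OF refl])
    fix i assume "i \<in> {..<n}"
    then have i: "i < n"
      by simp
    have "Ex \<Omega> (\<lambda>z. \<alpha> i (z i) / nq (z i)) = (\<Sum>q<Q. nq q * (\<alpha> i q / nq q)) / n"
      by (rule Ex_unit_value[OF i])
    also have "(\<Sum>q<Q. nq q * (\<alpha> i q / nq q)) = (\<Sum>q<Q. \<alpha> i q)"
      by (rule sum.cong) (simp_all add: nq_nonzero)
    finally show "Ex \<Omega> (\<lambda>z. \<alpha> i (z i) / nq (z i)) = (\<Sum>q<Q. \<alpha> i q) / n" .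
  qed
  also have "\<dots> = (\<Sum>q<Q. Ybar n \<alpha> q)"
    unfolding Ybar_def sum_divide_distrib by (rule sum.swap)
  finally show ?thesis .
qed

lemma sum_Yhat_centered:
  assumes z: "z \<in> \<Omega>"
  shows "(\<Sum>q<Q. Yhat n nq \<gamma> z q) - Ex \<Omega> (\<lambda>z. \<Sum>q<Q. Yhat n nq \<gamma> z q)
    = (\<Sum>i<n. (\<gamma> i (z i) - Ybar n \<gamma> (z i)) / nq (z i))"
proof -
  have "(\<Sum>i<n. Ybar n \<gamma> (z i) / nq (z i)) = (\<Sum>q<Q. nq q * (Ybar n \<gamma> q / nq q))"
    by (rule sum_units_by_group[OF z])
  also have "\<dots> = (\<Sum>q<Q. Ybar n \<gamma> q)"
    using nq_nonzero by simp
  finally show ?thesis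
    using sum_Yhat[OF z] by (simp add: Ex_sum_Yhat diff_divide_distrib sum_subtractf)
qed

lemma sum_Ex_unit_pairs:
  fixes a :: "nat \<Rightarrow> real" and b :: "nat \<Rightarrow> nat \<Rightarrow> real"
  assumes i: "i < n"
    and groups: "\<And>j. j < n \<Longrightarrow> (\<Sum>q<Q. nq q * b j q) = 0"
    and units: "\<And>q. (\<Sum>j<n. b j q) = 0"
  shows "(\<Sum>j<n. Ex \<Omega> (\<lambda>z. a (z i) * b j (z j))) = (\<Sum>q<Q. nq q * a q * b i q) / (n - 1)"
proof -
  let ?s = "\<lambda>j. \<Sum>q<Q. nq q * a q * b j q"
  have "(\<Sum>j\<in>{..<n} - {i}. b j q) = - b i q" for q
    using units[of q] i by (simp add: sum_diff1)
  then have others: "(\<Sum>j\<in>{..<n} - {i}. ?s j) = - ?s i"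
    by (subst sum.swap) (simp add: sum_negf flip: sum_distrib_left)
  have "(\<Sum>j<n. Ex \<Omega> (\<lambda>z. a (z i) * b j (z j)))
      = Ex \<Omega> (\<lambda>z. a (z i) * b i (z i)) + (\<Sum>j\<in>{..<n} - {i}. Ex \<Omega> (\<lambda>z. a (z i) * b j (z j)))"
    using i by (simp add: sum.remove)
  also have "\<dots> = ?s i / n + (\<Sum>j\<in>{..<n} - {i}. - 1 / (n * (n - 1)) * ?s j)"
    using i by (simp add: Ex_unit_pair_centered[OF i] groups)
  also have "(\<Sum>j\<in>{..<n} - {i}. - 1 / (n * (n - 1)) * ?s j) = - 1 / (n * (n - 1)) * - ?s i"
    by (simp only: others flip: sum_distrib_left)
  also have "?s i / n + - 1 / (n * (n - 1)) * - ?s i = ?s i / (n - 1)"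
    using two_units by (simp add: field_simps)
  finally show ?thesis .
qed

text \<open>
  The hypothesis on \<open>\<beta>\<close> removes the usual correction term of Neyman's formula, the
  finite-population covariance of the unit-level sums \<open>\<Sum>\<^sub>q \<alpha> i q\<close> and \<open>\<Sum>\<^sub>q \<beta> i q\<close> divided by \<open>n\<close>.
\<close>

lemma covar_sum_Yhat:
  assumes \<beta>: "\<And>i. i < n \<Longrightarrow> (\<Sum>q<Q. \<beta> i q) = 0"
  shows "covar \<Omega> (\<lambda>z. \<Sum>q<Q. Yhat n nq \<alpha> z q) (\<lambda>z. \<Sum>q<Q. Yhat n nq \<beta> z q)
    = (\<Sum>q<Q. fpcov n (\<lambda>i. \<alpha> i q) (\<lambda>i. \<beta> i q) / nq q)"
proof -
  define a where "a i q = (\<alpha> i q - Ybar n \<alpha> q) / nq q" for i q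
  define b where "b i q = (\<beta> i q - Ybar n \<beta> q) / nq q" for i q
  have groups: "(\<Sum>q<Q. nq q * b j q) = 0" if "j < n" for j
  proof -
    have "(\<Sum>q<Q. Ybar n \<beta> q) = (\<Sum>i<n. \<Sum>q<Q. \<beta> i q) / n"
      unfolding Ybar_def sum_divide_distrib by (rule sum.swap)
    then have "(\<Sum>q<Q. Ybar n \<beta> q) = 0"
      using \<beta> by simp
    then show ?thesis
      using \<beta>[OF that] nq_nonzero by (simp add: b_def sum_subtractf)
  qed
  have units: "(\<Sum>j<n. b j q) = 0" for q
    using two_units by (simp add: b_def Ybar_def sum_subtractf flip: sum_divide_distrib)
  have "covar \<Omega> (\<lambda>z. \<Sum>q<Q. Yhat n nq \<alpha> z q) (\<lambda>z. \<Sum>q<Q. Yhat n nq \<beta> z q)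
      = Ex \<Omega> (\<lambda>z. (\<Sum>i<n. a i (z i)) * (\<Sum>j<n. b j (z j)))"
    unfolding covar_def a_def b_def by (rule Ex_cong) (simp add: sum_Yhat_centered)
  also have "\<dots> = (\<Sum>i<n. \<Sum>j<n. Ex \<Omega> (\<lambda>z. a i (z i) * b j (z j)))"
    by (simp add: sum_product Ex_sum)
  also have "\<dots> = (\<Sum>i<n. (\<Sum>q<Q. nq q * a i q * b i q) / (n - 1))"
    by (intro sum.cong refl) (rule sum_Ex_unit_pairs[OF _ groups units], simp)
  also have "\<dots> = (\<Sum>q<Q. \<Sum>i<n. (\<alpha> i q - Ybar n \<alpha> q) * (\<beta> i q - Ybar n \<beta> q) / nq q) / (n - 1)"
  proof -
    have "nq q * a i q * b i q = (\<alpha> i q - Ybar n \<alpha> q) * (\<beta> i q - Ybar n \<beta> q) / nq q"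
      if "q < Q" for i q
      using nq_nonzero[OF that] by (simp add: a_def b_def field_simps)
    then show ?thesis
      by (subst sum.swap) (simp add: sum_divide_distrib)
  qed
  also have "\<dots> = (\<Sum>q<Q. fpcov n (\<lambda>i. \<alpha> i q) (\<lambda>i. \<beta> i q) / nq q)"
    by (simp add: fpcov_def Ybar_def sum_divide_distrib mult.commute)
  finally show ?thesis .
qed

lemma covar_contrast_covariate:
  assumes "(\<Sum>q<Q. v q) = 0"
  shows "covar \<Omega> (\<lambda>z. \<Sum>q<Q. Yhat n nq (\<lambda>i q. u q * y i q) z q)
      (\<lambda>z. \<Sum>q<Q. Yhat n nq (\<lambda>i q. v q * x i) z q)
    = (\<Sum>q<Q. u q * v q * fpcov n (\<lambda>i. y i q) x / nq q)"
proof -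
  have "(\<Sum>q<Q. v q * x i) = 0" for i
    using assms by (simp flip: sum_distrib_right)
  then show ?thesis
    by (simp add: covar_sum_Yhat fpcov_scale)
qed

end

section \<open>Factorial effects and their tier-wise projections\<close>

lemma sum_sign_vectors_prod:
  assumes A: "A \<subseteq> {0..<K}" and A': "A' \<subseteq> {0..<K}"
  shows "(\<Sum>s\<in>{0..<K} \<rightarrow>\<^sub>E {-1, 1::real}. (\<Prod>k\<in>A. s k) * (\<Prod>k\<in>A'. s k))
    = (if A = A' then 2 ^ K else 0)"
proof -
  have restrict: "(\<Prod>k\<in>B. s k) = (\<Prod>k\<in>{0..<K}. if k \<in> B then s k else 1)"
    if "B \<subseteq> {0..<K}" for B and s :: "nat \<Rightarrow> real"
  proof -
    have "(\<Prod>k\<in>{0..<K}. if k \<in> B then s k else 1) = prod s {k \<in> {0..<K}. k \<in> B}"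
      by (rule prod.inter_filter[symmetric]) simp
    also have "{k \<in> {0..<K}. k \<in> B} = B"
      using that by auto
    finally show ?thesis ..
  qed
  have "(\<Sum>s\<in>{0..<K} \<rightarrow>\<^sub>E {-1, 1::real}. (\<Prod>k\<in>A. s k) * (\<Prod>k\<in>A'. s k))
      = (\<Sum>s\<in>{0..<K} \<rightarrow>\<^sub>E {-1, 1}. \<Prod>k\<in>{0..<K}. (if k \<in> A then s k else 1) * (if k \<in> A' then s k else 1))"
    by (simp add: restrict[OF A] restrict[OF A'] prod.distrib)
  also have "\<dots> = (\<Prod>k\<in>{0..<K}. \<Sum>x\<in>{-1, 1::real}. (if k \<in> A then x else 1) * (if k \<in> A' then x else 1))"
    by (rule prod_sum_PiE[symmetric]) auto
  also have "\<dots> = (\<Prod>k\<in>{0..<K}. if (k \<in> A) = (k \<in> A') then 2 else 0)"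
    by (intro prod.cong refl) auto
  also have "\<dots> = (if A = A' then 2 ^ K else 0)"
  proof (cases "A = A'")
    case False
    with A A' obtain k where k: "k \<in> {0..<K}" "(k \<in> A) \<noteq> (k \<in> A')"
      by blast
    have "(\<Prod>k\<in>{0..<K}. if (k \<in> A) = (k \<in> A') then 2 else 0) = (0::real)"
      by (rule prod_zero) (use k in auto)
    with False show ?thesis
      by simp
  qed simp
  finally show ?thesis .
qed

lemma bij_betw_pick:
  assumes S: "finite S"
  shows "bij_betw (pick S) {..<card S} S"
proof (rule bij_betw_imageI)
  show "inj_on (pick S) {..<card S}"
  proof (rule inj_onI)
    fix a b assume a: "a \<in> {..<card S}" and b: "b \<in> {..<card S}" and eq: "pick S a = pick S b"
    show "a = b"
    proof (rule ccontr)
      assume "a \<noteq> b"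
      then consider "a < b" | "b < a"
        by linarith
      then show False
      proof cases
        case 1
        with pick_mono_le[of b S a] b eq show False
          by simp
      next
        case 2
        with pick_mono_le[of a S b] a eq show False
          by simp
      qed
    qed
  qed
  show "pick S ` {..<card S} = S"
  proof
    show "pick S ` {..<card S} \<subseteq> S"
      using pick_in_set_le by blast
    show "S \<subseteq> pick S ` {..<card S}"
    proof
      fix e assume e: "e \<in> S"
      have "{a \<in> S. a < e} \<subset> S"
        using e by auto
      then have "card {a \<in> S. a < e} < card S"
        using S by (rule psubset_card_mono[rotated])
      then show "e \<in> pick S ` {..<card S}"
        by (intro image_eqI[where x = "card {a \<in> S. a < e}"]) (simp_all add: pick_card_in_set[OF e])
    qed
  qed
qed

lemma index_mult_mat_sum:
  assumes "A \<in> carrier_mat m p" and "C \<in> carrier_mat p k" and "i < m" and "j < k"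
  shows "(A * C) $$ (i, j) = (\<Sum>a<p. A $$ (i, a) * C $$ (a, j))"
  using assms by (simp add: scalar_prod_def atLeast0LessThan)

lemma Collect_less_and_mem: "S \<subseteq> {0..<m} \<Longrightarrow> {i. i < m \<and> i \<in> S} = S"
  by auto

lemma weighted_gram_quadratic_form:
  fixes G :: "nat \<Rightarrow> nat \<Rightarrow> real" and v :: "real vec"
  shows "(\<Sum>b<p. v $ b * (\<Sum>a<p. (\<Sum>q<N. w q * G b q * G a q) * v $ a))
    = (\<Sum>q<N. w q * (\<Sum>a<p. v $ a * G a q)\<^sup>2)"
proof -
  have "(\<Sum>q<N. w q * (\<Sum>a<p. v $ a * G a q)\<^sup>2)
      = (\<Sum>q<N. \<Sum>a<p. \<Sum>b<p. w q * (v $ b * G b q) * (v $ a * G a q))"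
    by (simp add: power2_eq_square sum_distrib_left sum_distrib_right mult.assoc)
  also have "\<dots> = (\<Sum>a<p. \<Sum>q<N. \<Sum>b<p. w q * (v $ b * G b q) * (v $ a * G a q))"
    by (rule sum.swap)
  also have "\<dots> = (\<Sum>a<p. \<Sum>b<p. \<Sum>q<N. w q * (v $ b * G b q) * (v $ a * G a q))"
    by (rule sum.cong[OF refl], rule sum.swap)
  also have "\<dots> = (\<Sum>b<p. v $ b * (\<Sum>a<p. (\<Sum>q<N. w q * G b q * G a q) * v $ a))"
    by (simp add: sum_distrib_left sum_distrib_right mult_ac)
  finally show ?thesis ..
qed

lemma det_weighted_gram_nonzero:
  fixes G :: "nat \<Rightarrow> nat \<Rightarrow> real"
  assumes w: "\<And>q. q < N \<Longrightarrow> w q > 0"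
    and orth: "\<And>a b. a < p \<Longrightarrow> b < p \<Longrightarrow> (\<Sum>q<N. G a q * G b q) = (if a = b then c else 0)"
    and c: "c \<noteq> 0"
  shows "det (mat p p (\<lambda>(a, b). \<Sum>q<N. w q * G a q * G b q)) \<noteq> 0"
proof
  define A where "A = mat p p (\<lambda>(a, b). \<Sum>q<N. w q * G a q * G b q)"
  assume "det (mat p p (\<lambda>(a, b). \<Sum>q<N. w q * G a q * G b q)) = 0"
  then obtain v where v: "v \<in> carrier_vec p" "v \<noteq> 0\<^sub>v p" "A *\<^sub>v v = 0\<^sub>v p"
    using det_0_iff_vec_prod_zero_field[of A p] unfolding A_def by auto
  define s where "s q = (\<Sum>a<p. v $ a * G a q)" for q
  have "(\<Sum>q<N. w q * (s q)\<^sup>2) = (\<Sum>b<p. v $ b * (A *\<^sub>v v) $ b)"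
    using v(1) by (simp add: s_def A_def weighted_gram_quadratic_form scalar_prod_def atLeast0LessThan)
  also have "\<dots> = 0"
    using v(3) by simp
  finally have "(\<Sum>q<N. w q * (s q)\<^sup>2) = 0" .
  then have squares: "\<forall>q\<in>{..<N}. w q * (s q)\<^sup>2 = 0"
    using w by (subst (asm) sum_nonneg_eq_0_iff) (auto simp: less_imp_le)
  have s0: "s q = 0" if "q < N" for q
    using w[OF that] bspec[OF squares, of q] that by simp
  have "v $ b = 0" if b: "b < p" for b
  proof -
    have "c * v $ b = (\<Sum>a<p. v $ a * (if a = b then c else 0))"
      using b by (simp add: if_distrib cong: if_cong)
    also have "\<dots> = (\<Sum>a<p. v $ a * (\<Sum>q<N. G a q * G b q))"
      by (intro sum.cong refl) (simp add: orth b)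
    also have "\<dots> = (\<Sum>q<N. \<Sum>a<p. v $ a * G a q * G b q)"
      by (subst sum.swap) (simp add: sum_distrib_left mult.assoc)
    also have "\<dots> = (\<Sum>q<N. s q * G b q)"
      by (simp add: s_def sum_distrib_right)
    also have "\<dots> = 0"
      by (simp add: s0)
    finally show ?thesis
      using c by simp
  qed
  then have "v = 0\<^sub>v p"
    using v(1) by (intro eq_vecI) auto
  with v(2) show False ..
qed

lemma matinv_left_inverse:
  assumes A: "A \<in> carrier_mat p p" and det: "det A \<noteq> 0"
  shows "matinv A \<in> carrier_mat p p" and "matinv A * A = 1\<^sub>m p"
proof -
  have "mat_inverse A \<noteq> None"
  proof
    assume "mat_inverse A = None"
    then have "A \<notin> Units (ring_mat TYPE(real) p ())"
      by (rule mat_inverse(1)[OF A])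
    with det_non_zero_imp_unit[OF A det, where b = "()"] show False
      by blast
  qed
  then obtain B where "mat_inverse A = Some B"
    by auto
  then have "matinv A = B" and "B * A = 1\<^sub>m p" and "B \<in> carrier_mat p p"
    using mat_inverse(2)[OF A] by (auto simp: matinv_def)
  then show "matinv A \<in> carrier_mat p p" and "matinv A * A = 1\<^sub>m p"
    by simp_all
qed

locale factorial_effects =
  fixes K :: nat and iota :: "nat \<Rightarrow> nat \<Rightarrow> real" and eff :: "nat \<Rightarrow> nat set"
  assumes iota_bij: "bij_betw (\<lambda>q. restrict (iota q) {0..<K}) {0..<2^K} ({0..<K} \<rightarrow>\<^sub>E {-1, 1})"
    and eff_bij: "bij_betw eff {0..<2^K - 1} {A. A \<subseteq> {0..<K} \<and> A \<noteq> {}}"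
begin

abbreviation F :: nat where "F \<equiv> 2^K - 1"

abbreviation g :: "nat \<Rightarrow> nat \<Rightarrow> real" where "g f q \<equiv> gcoef iota eff f q"

lemma sum_levels_prod:
  assumes "A \<subseteq> {0..<K}" and "A' \<subseteq> {0..<K}"
  shows "(\<Sum>q<2^K. (\<Prod>k\<in>A. iota q k) * (\<Prod>k\<in>A'. iota q k)) = (if A = A' then 2 ^ K else 0)"
proof -
  have "(\<Prod>k\<in>B. iota q k) = (\<Prod>k\<in>B. restrict (iota q) {0..<K} k)" if "B \<subseteq> {0..<K}" for B q
    using that by (intro prod.cong) auto
  then have "(\<Sum>q<2^K. (\<Prod>k\<in>A. iota q k) * (\<Prod>k\<in>A'. iota q k))
      = (\<Sum>q\<in>{0..<2^K}. (\<Prod>k\<in>A. restrict (iota q) {0..<K} k) * (\<Prod>k\<in>A'. restrict (iota q) {0..<K} k))"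
    using assms by (simp add: atLeast0LessThan)
  also have "\<dots> = (\<Sum>s\<in>{0..<K} \<rightarrow>\<^sub>E {-1, 1}. (\<Prod>k\<in>A. s k) * (\<Prod>k\<in>A'. s k))"
    by (rule sum.reindex_bij_betw[OF iota_bij])
  finally show ?thesis
    using sum_sign_vectors_prod[OF assms] by simp
qed

lemma eff_subset: "f < F \<Longrightarrow> eff f \<subseteq> {0..<K} \<and> eff f \<noteq> {}"
  using bij_betw_apply[OF eff_bij, of f] by auto

lemma gcoef_orthogonal:
  assumes "f < F" and "f' < F"
  shows "(\<Sum>q<2^K. g f q * g f' q) = (if f = f' then 2 ^ K else 0)"
proof -
  have "eff f = eff f' \<longleftrightarrow> f = f'"
    using assms bij_betw_imp_inj_on[OF eff_bij] by (auto simp: inj_on_def)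
  then show ?thesis
    using sum_levels_prod[of "eff f" "eff f'"] eff_subset assms by (simp add: gcoef_def)
qed

lemma gcoef_sum:
  assumes "f < F"
  shows "(\<Sum>q<2^K. g f q) = 0"
  using sum_levels_prod[of "eff f" "{}"] eff_subset[OF assms] by (simp add: gcoef_def)

definition effect_span :: "nat set \<Rightarrow> (nat \<Rightarrow> real) set"
  where "effect_span S = {u. \<exists>co. \<forall>q. u q = (\<Sum>e\<in>S. co e * g e q)}"

lemma sum_effect_span:
  assumes "S \<subseteq> {0..<F}" and "u \<in> effect_span S"
  shows "(\<Sum>q<2^K. u q) = 0"
proof -
  obtain co where u: "\<And>q. u q = (\<Sum>e\<in>S. co e * g e q)"
    using assms(2) by (auto simp: effect_span_def)
  have "(\<Sum>q<2^K. u q) = (\<Sum>e\<in>S. co e * (\<Sum>q<2^K. g e q))"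
    by (simp add: u sum_distrib_left sum.swap[of _ "{..<2^K}"])
  also have "\<dots> = 0"
    using assms(1) by (intro sum.neutral) (auto simp: gcoef_sum)
  finally show ?thesis .
qed

lemma orthogonal_effect_span:
  assumes "\<And>e. e \<in> S \<Longrightarrow> (\<Sum>q<2^K. w q * v q * g e q) = 0" and "u \<in> effect_span S"
  shows "(\<Sum>q<2^K. w q * v q * u q) = 0"
proof -
  obtain co where u: "\<And>q. u q = (\<Sum>e\<in>S. co e * g e q)"
    using assms(2) by (auto simp: effect_span_def)
  have "(\<Sum>q<2^K. w q * v q * u q) = (\<Sum>e\<in>S. co e * (\<Sum>q<2^K. w q * v q * g e q))"
    by (simp add: u sum_distrib_left mult_ac sum.swap[of _ "{..<2^K}"])
  also have "\<dots> = 0"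
    using assms(1) by simp
  finally show ?thesis .
qed

end

locale tiered_effects = factorial_effects +
  fixes nq :: "nat \<Rightarrow> nat" and tier :: "nat \<Rightarrow> nat set" and H :: nat
  assumes nq_pos: "\<And>q. q < 2^K \<Longrightarrow> nq q \<ge> 1"
    and tier_subset: "\<And>h. h < H \<Longrightarrow> tier h \<subseteq> {0..<F}"
begin

abbreviation w :: "nat \<Rightarrow> real" where "w q \<equiv> 1 / (2 ^ (2 * (K - 1)) * real (nq q))"

abbreviation B :: "real mat" where "B \<equiv> Btil K iota eff nq"

abbreviation P :: "nat \<Rightarrow> nat set" where "P h \<equiv> prevtiers tier h"

abbreviation M :: "nat \<Rightarrow> real mat"
  where "M h \<equiv> submatrix B (tier h) (P h) * matinv (submatrix B (P h) (P h))"

abbreviation c :: "nat \<Rightarrow> nat \<Rightarrow> real vec" where "c q h \<equiv> cvec K iota eff nq tier q h"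

lemma prevtiers_subset:
  assumes "h \<le> H"
  shows "P h \<subseteq> {0..<F}"
  unfolding prevtiers_def
proof (rule UN_least)
  fix l assume "l \<in> {..<h}"
  with assms show "tier l \<subseteq> {0..<F}"
    by (intro tier_subset) simp
qed

lemma prevtiers_Suc: "P (Suc h) = P h \<union> tier h"
  by (auto simp: prevtiers_def lessThan_Suc)

lemma prevtiers_mono: "h' \<le> h \<Longrightarrow> P h' \<subseteq> P h"
  unfolding prevtiers_def by (rule UN_mono) auto

lemma pick_in_effects: "S \<subseteq> {0..<F} \<Longrightarrow> a < card S \<Longrightarrow> pick S a \<in> S \<and> pick S a < F"
  using pick_in_set_le[of a S] by auto

lemma dim_Btil: "dim_row B = F" "dim_col B = F"
  by (simp_all add: Btil_def)

lemma submatrix_Btil: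
  assumes S: "S \<subseteq> {0..<F}" and S': "S' \<subseteq> {0..<F}"
  shows "submatrix B S S' = mat (card S) (card S') (\<lambda>(a, b). \<Sum>q<2^K. w q * g (pick S a) q * g (pick S' b) q)"
proof (rule eq_matI)
  fix a b assume "a < dim_row (mat (card S) (card S') (\<lambda>(a, b). \<Sum>q<2^K. w q * g (pick S a) q * g (pick S' b) q))"
    and "b < dim_col (mat (card S) (card S') (\<lambda>(a, b). \<Sum>q<2^K. w q * g (pick S a) q * g (pick S' b) q))"
  then have a: "a < card S" and b: "b < card S'"
    by simp_all
  have "submatrix B S S' $$ (a, b) = B $$ (pick S a, pick S' b)"
    using a b by (intro submatrix_index) (simp_all only: dim_Btil Collect_less_and_mem[OF S] Collect_less_and_mem[OF S'])
  also have "\<dots> = (\<Sum>q<2^K. w q * g (pick S a) q * g (pick S' b) q)"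
    using pick_in_effects[OF S a] pick_in_effects[OF S' b] by (simp add: Btil_def sum_distrib_left mult_ac)
  finally show "submatrix B S S' $$ (a, b) = mat (card S) (card S') (\<lambda>(a, b). \<Sum>q<2^K. w q * g (pick S a) q * g (pick S' b) q) $$ (a, b)"
    using a b by simp
qed (simp_all only: dim_submatrix dim_Btil Collect_less_and_mem[OF S] Collect_less_and_mem[OF S'] dim_row_mat dim_col_mat)

lemma submatrix_Btil_carrier:
  "S \<subseteq> {0..<F} \<Longrightarrow> S' \<subseteq> {0..<F} \<Longrightarrow> submatrix B S S' \<in> carrier_mat (card S) (card S')"
  by (simp add: submatrix_Btil)

lemma det_submatrix_Btil:
  assumes S: "S \<subseteq> {0..<F}"
  shows "det (submatrix B S S) \<noteq> 0"
proof -
  have inj: "inj_on (pick S) {..<card S}"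
    using bij_betw_pick[of S] finite_subset[OF S] by (simp add: bij_betw_def)
  have "(\<Sum>q<2^K. g (pick S a) q * g (pick S b) q) = (if a = b then 2 ^ K else 0)"
    if "a < card S" "b < card S" for a b
    using gcoef_orthogonal[of "pick S a" "pick S b"] pick_in_effects[OF S] that inj_onD[OF inj, of a b]
    by auto
  moreover have "w q > 0" if "q < 2^K" for q
    using nq_pos[OF that] by simp
  ultimately show ?thesis
    unfolding submatrix_Btil[OF S S] by (intro det_weighted_gram_nonzero) auto
qed

lemma M_carrier:
  assumes h: "h < H"
  shows "M h \<in> carrier_mat (card (tier h)) (card (P h))"
proof -
  have P: "P h \<subseteq> {0..<F}" and T: "tier h \<subseteq> {0..<F}"
    using prevtiers_subset[of h] tier_subset[OF h] h by simp_all
  show ?thesis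
    using submatrix_Btil_carrier[OF T P]
      matinv_left_inverse(1)[OF submatrix_Btil_carrier[OF P P] det_submatrix_Btil[OF P]]
    by (rule mult_carrier_mat)
qed

lemma M_mult_submatrix:
  assumes h: "h < H"
  shows "M h * submatrix B (P h) (P h) = submatrix B (tier h) (P h)"
proof -
  have P: "P h \<subseteq> {0..<F}" and T: "tier h \<subseteq> {0..<F}"
    using prevtiers_subset[of h] tier_subset[OF h] h by simp_all
  note Bpp = submatrix_Btil_carrier[OF P P] and Btp = submatrix_Btil_carrier[OF T P]
  note inv = matinv_left_inverse[OF Bpp det_submatrix_Btil[OF P]]
  have "M h * submatrix B (P h) (P h)
      = submatrix B (tier h) (P h) * (matinv (submatrix B (P h) (P h)) * submatrix B (P h) (P h))"
    using Btp inv(1) Bpp by (rule assoc_mult_mat)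
  also have "\<dots> = submatrix B (tier h) (P h)"
    using Btp by (simp add: inv(2))
  finally show ?thesis .
qed

lemma subvec_bvec:
  assumes S: "S \<subseteq> {0..<F}"
  shows "dim_vec (subvec (bvec K iota eff q) S) = card S"
    and "a < card S \<Longrightarrow> subvec (bvec K iota eff q) S $ a = g (pick S a) q"
proof -
  have "dim_vec (bvec K iota eff q) = F"
    by (simp add: bvec_def)
  then have sub: "subvec (bvec K iota eff q) S = vec (card S) (\<lambda>j. bvec K iota eff q $ pick S j)"
    by (simp only: subvec_def Collect_less_and_mem[OF S])
  show "dim_vec (subvec (bvec K iota eff q) S) = card S"
    by (simp add: sub)
  show "subvec (bvec K iota eff q) S $ a = g (pick S a) q" if "a < card S"
    unfolding sub using pick_in_effects[OF S that] that by (simp add: bvec_def)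
qed

lemma dim_cvec: "h < H \<Longrightarrow> dim_vec (c q h) = card (tier h)"
  using tier_subset[of h] subvec_bvec prevtiers_subset[of h]
  by (auto simp: cvec_def submatrix_Btil)

lemma index_cvec:
  assumes h: "h < H" and r: "r < card (tier h)"
  shows "c q h $ r = g (pick (tier h) r) q - (\<Sum>a<card (P h). M h $$ (r, a) * g (pick (P h) a) q)"
proof (cases "h = 0")
  case True
  then show ?thesis
    using subvec_bvec(2)[OF tier_subset[OF h] r] by (simp add: cvec_def prevtiers_def)
next
  case False
  have P: "P h \<subseteq> {0..<F}" and T: "tier h \<subseteq> {0..<F}"
    using prevtiers_subset[of h] tier_subset[OF h] h by simp_all
  note dims = carrier_matD[OF M_carrier[OF h]]
  have "c q h $ r = subvec (bvec K iota eff q) (tier h) $ r - (M h *\<^sub>v subvec (bvec K iota eff q) (P h)) $ r"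
    using False r dims by (simp add: cvec_def)
  also have "(M h *\<^sub>v subvec (bvec K iota eff q) (P h)) $ r
      = (\<Sum>a<card (P h). M h $$ (r, a) * subvec (bvec K iota eff q) (P h) $ a)"
    using r dims by (simp add: scalar_prod_def atLeast0LessThan subvec_bvec(1)[OF P])
  finally show ?thesis
    using r by (simp add: subvec_bvec(2)[OF T] subvec_bvec(2)[OF P])
qed

lemma cvec_in_effect_span:
  assumes h: "h < H" and r: "r < card (tier h)"
  shows "(\<lambda>q. c q h $ r) \<in> effect_span (P (Suc h))"
proof -
  let ?S = "P (Suc h)"
  have fin: "finite ?S"
    using prevtiers_subset[of "Suc h"] h finite_subset by auto
  have delta: "(\<Sum>e\<in>?S. (if e = x then 1 else 0) * g e q) = g x q" if "x \<in> ?S" for x q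
  proof -
    have "(\<Sum>e\<in>?S. (if e = x then 1 else 0) * g e q) = (\<Sum>e\<in>?S. if e = x then g e q else 0)"
      by (rule sum.cong) simp_all
    then show ?thesis
      using fin that by simp
  qed
  have t: "pick (tier h) r \<in> ?S"
    using pick_in_effects[OF tier_subset[OF h] r] by (simp add: prevtiers_Suc)
  have p: "pick (P h) a \<in> ?S" if "a < card (P h)" for a
    using pick_in_effects[OF prevtiers_subset that] h by (simp add: prevtiers_Suc)
  define co where "co e = (if e = pick (tier h) r then 1 else 0)
      - (\<Sum>a<card (P h). M h $$ (r, a) * (if e = pick (P h) a then 1 else 0))" for e
  have "c q h $ r = (\<Sum>e\<in>?S. co e * g e q)" for q
  proof -
    have "(\<Sum>e\<in>?S. co e * g e q) = (\<Sum>e\<in>?S. (if e = pick (tier h) r then 1 else 0) * g e q)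
        - (\<Sum>a<card (P h). M h $$ (r, a) * (\<Sum>e\<in>?S. (if e = pick (P h) a then 1 else 0) * g e q))"
      by (simp add: co_def left_diff_distrib sum_subtractf sum_distrib_left sum_distrib_right mult.assoc
          sum.swap[of _ "{..<card (P h)}"])
    then show ?thesis
      by (simp add: index_cvec[OF h r] delta t p)
  qed
  then show ?thesis
    by (auto simp: effect_span_def)
qed

lemma sum_cvec:
  assumes h: "h < H" and r: "r < card (tier h)"
  shows "(\<Sum>q<2^K. c q h $ r) = 0"
  using sum_effect_span[OF prevtiers_subset cvec_in_effect_span[OF h r]] h by simp

lemma cvec_orthogonal_prevtiers:
  assumes h: "h < H" and r: "r < card (tier h)" and e: "e \<in> P h"
  shows "(\<Sum>q<2^K. w q * c q h $ r * g e q) = 0"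
proof -
  \<comment> \<open>\<open>M h\<close> is the coefficient matrix of the weighted least-squares projection onto the
     earlier contrasts, so the residual \<open>c\<^sub>q[h]\<close> is orthogonal to each of them.\<close>
  have P: "P h \<subseteq> {0..<F}" and T: "tier h \<subseteq> {0..<F}"
    using prevtiers_subset[of h] tier_subset[OF h] h by simp_all
  have "e \<in> pick (P h) ` {..<card (P h)}"
    using bij_betw_imp_surj_on[OF bij_betw_pick[OF finite_subset[OF P]]] e by simp
  then obtain a0 where a0: "a0 < card (P h)" "pick (P h) a0 = e"
    by auto
  have "(\<Sum>q<2^K. w q * c q h $ r * g e q)
      = (\<Sum>q<2^K. w q * g (pick (tier h) r) q * g e q)
        - (\<Sum>a<card (P h). M h $$ (r, a) * (\<Sum>q<2^K. w q * g (pick (P h) a) q * g e q))"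
    by (simp add: index_cvec[OF h r] right_diff_distrib left_diff_distrib sum_subtractf
        sum_distrib_left sum_distrib_right mult_ac sum.swap[of _ "{..<2^K}"])
  also have "\<dots> = submatrix B (tier h) (P h) $$ (r, a0)
      - (\<Sum>a<card (P h). M h $$ (r, a) * submatrix B (P h) (P h) $$ (a, a0))"
    using r a0 by (simp add: submatrix_Btil[OF T P] submatrix_Btil[OF P P])
  also have "(\<Sum>a<card (P h). M h $$ (r, a) * submatrix B (P h) (P h) $$ (a, a0))
      = (M h * submatrix B (P h) (P h)) $$ (r, a0)"
    using index_mult_mat_sum[OF M_carrier[OF h] submatrix_Btil_carrier[OF P P] r a0(1)] by simp
  finally show ?thesis
    by (simp add: M_mult_submatrix[OF h])
qed

lemma cvec_orthogonal:
  assumes h: "h < H" and h': "h' < H" and hh': "h \<noteq> h'"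
    and r: "r < card (tier h)" and r': "r' < card (tier h')"
  shows "(\<Sum>q<2^K. w q * c q h $ r * c q h' $ r') = 0"
proof -
  have earlier: "(\<Sum>q<2^K. w q * c q l $ s * c q l' $ s') = 0"
    if "l' < l" "l < H" "s < card (tier l)" "s' < card (tier l')" for l l' s s'
  proof (rule orthogonal_effect_span)
    show "(\<lambda>q. c q l' $ s') \<in> effect_span (P (Suc l'))"
      using that by (intro cvec_in_effect_span) simp_all
    show "(\<Sum>q<2^K. w q * c q l $ s * g e q) = 0" if "e \<in> P (Suc l')" for e
      using prevtiers_mono[of "Suc l'" l] \<open>l' < l\<close> that
      by (intro cvec_orthogonal_prevtiers[OF \<open>l < H\<close> \<open>s < card (tier l)\<close>]) auto
  qed
  show ?thesis
  proof (cases "h' < h")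
    case True
    then show ?thesis
      using earlier h r r' by blast
  next
    case False
    with hh' have "h < h'"
      by simp
    then show ?thesis
      using earlier[OF _ h' r' r] by (simp add: mult_ac)
  qed
qed

end

section \<open>Moments of the estimators\<close>

lemma sum_list_card_tiers:
  assumes disj: "\<And>h h'. h < H \<Longrightarrow> h' < H \<Longrightarrow> h \<noteq> h' \<Longrightarrow> tier h \<inter> tier h' = {}"
    and cover: "(\<Union>h<H. tier h) = {0..<m}"
  shows "(\<Sum>h\<leftarrow>[0..<H]. card (tier h) * L) = m * L"
proof -
  have fin: "finite (tier h)" if "h < H" for h
    using cover that by (metis finite_atLeastLessThan finite_subset lessThan_iff UN_upper)
  have "(\<Sum>h\<leftarrow>[0..<H]. card (tier h) * L) = (\<Sum>h<H. card (tier h)) * L"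
    by (simp add: sum_list_distinct_conv_sum_set atLeast0LessThan sum_distrib_right)
  also have "(\<Sum>h<H. card (tier h)) = card (\<Union>h<H. tier h)"
    using fin disj by (intro card_UN_disjoint[symmetric]) auto
  finally show ?thesis
    using cover by simp
qed

locale tiered_crfe = crfe n "2^K" nq + tiered_effects K iota eff nq tier H
  for n K nq iota eff tier H
begin

lemma tau_error_index:
  assumes f: "f < F"
  shows "(tauhat K iota eff n nq Y z - tau K iota eff n Y) $ f
    = (\<Sum>q<2^K. Yhat n nq (\<lambda>i q. g f q / 2^(K-1) * Y i q) z q) - (\<Sum>q<2^K. Ybar n (\<lambda>i q. g f q / 2^(K-1) * Y i q) q)"
  unfolding Yhat_scale Ybar_scale using f by (simp add: tauhat_def tau_def vsum_def bvec_def mult.commute)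

lemma thetahat_index:
  assumes h: "h < H" and j: "j < card (tier h) * L"
  shows "thetahat K iota eff n L nq tier x h z $ j
    = (\<Sum>q<2^K. Yhat n nq (\<lambda>i q. c q h $ (j div L) / 2^(K-1) * x i (j mod L)) z q)"
proof -
  have L: "j mod L < L"
    using j by (cases L) simp_all
  then show ?thesis
    unfolding Yhat_scale using j dim_cvec[OF h] by (simp add: thetahat_def vsum_def kronv_def xhat_def Yhat_def)
qed

lemma sum_cvec_scaled:
  assumes h: "h < H" and j: "j < card (tier h) * L"
  shows "(\<Sum>q<2^K. c q h $ (j div L) / 2^(K-1)) = 0"
proof -
  have "j div L < card (tier h)"
    using j by (simp add: less_mult_imp_div_less)
  then show ?thesis
    using sum_cvec[OF h] by (simp flip: sum_divide_distrib)
qed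

lemma Ex_tau_error: "f < F \<Longrightarrow> Ex \<Omega> (\<lambda>z. (tauhat K iota eff n nq Y z - tau K iota eff n Y) $ f) = 0"
  by (simp add: tau_error_index Ex_diff Ex_const finite_\<Omega> \<Omega>_nonempty Ex_sum_Yhat)

lemma Ex_thetahat:
  assumes h: "h < H" and j: "j < card (tier h) * L"
  shows "Ex \<Omega> (\<lambda>z. thetahat K iota eff n L nq tier x h z $ j) = 0"
proof -
  have "Ex \<Omega> (\<lambda>z. thetahat K iota eff n L nq tier x h z $ j)
      = (\<Sum>q<2^K. Ybar n (\<lambda>i q. c q h $ (j div L) / 2^(K-1) * x i (j mod L)) q)"
    by (simp only: thetahat_index[OF h j] Ex_sum_Yhat)
  also have "\<dots> = (\<Sum>q<2^K. c q h $ (j div L) / 2^(K-1)) * Ybar n (\<lambda>i q. x i (j mod L)) 0"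
    unfolding Ybar_scale by (simp add: Ybar_def sum_distrib_right sum_divide_distrib)
  finally show ?thesis
    using sum_cvec_scaled[OF h j] by simp
qed

lemma Evec_errors:
  "Evec \<Omega> (F + (\<Sum>h\<leftarrow>[0..<H]. card (tier h) * L))
      (\<lambda>z. (tauhat K iota eff n nq Y z - tau K iota eff n Y) @\<^sub>v thetahat_all K iota eff n L nq tier H x z)
    = 0\<^sub>v (F + (\<Sum>h\<leftarrow>[0..<H]. card (tier h) * L))"
proof -
  have dim_theta: "dim_vec (thetahat K iota eff n L nq tier x h z) = card (tier h) * L" for h z
    by (simp add: thetahat_def vsum_def)
  have tau: "Evec \<Omega> F (\<lambda>z. tauhat K iota eff n nq Y z - tau K iota eff n Y) = 0\<^sub>v F"
    by (intro eq_vecI) (simp_all add: Evec_def Ex_tau_error)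
  have theta: "Evec \<Omega> (card (tier h) * L) (thetahat K iota eff n L nq tier x h) = 0\<^sub>v (card (tier h) * L)"
    if "h \<in> set [0..<H]" for h
    using that by (intro eq_vecI) (simp_all add: Evec_def Ex_thetahat)
  have dim_tau: "dim_vec (tauhat K iota eff n nq Y z - tau K iota eff n Y) = F" for z
    by (simp add: tauhat_def tau_def vsum_def)
  have dim_all: "dim_vec (thetahat_all K iota eff n L nq tier H x z) = (\<Sum>h\<leftarrow>[0..<H]. card (tier h) * L)" for z
    unfolding thetahat_all_def by (rule dim_foldr_append) (rule dim_theta)
  have all: "Evec \<Omega> (\<Sum>h\<leftarrow>[0..<H]. card (tier h) * L) (thetahat_all K iota eff n L nq tier H x)
      = 0\<^sub>v (\<Sum>h\<leftarrow>[0..<H]. card (tier h) * L)"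
    using Evec_foldr_append_zero[where hs = "[0..<H]" and X = "\<lambda>h z. thetahat K iota eff n L nq tier x h z"
        and d = "\<lambda>h. card (tier h) * L" and \<Omega> = \<Omega>]
    by (simp add: thetahat_all_def[abs_def] dim_theta theta)
  have "Evec \<Omega> (F + (\<Sum>h\<leftarrow>[0..<H]. card (tier h) * L))
      (\<lambda>z. (tauhat K iota eff n nq Y z - tau K iota eff n Y) @\<^sub>v thetahat_all K iota eff n L nq tier H x z)
    = 0\<^sub>v F @\<^sub>v 0\<^sub>v (\<Sum>h\<leftarrow>[0..<H]. card (tier h) * L)"
    by (simp only: Evec_append[OF dim_tau dim_all] tau all)
  also have "\<dots> = 0\<^sub>v (F + (\<Sum>h\<leftarrow>[0..<H]. card (tier h) * L))"
    by (intro eq_vecI) simp_all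
  finally show ?thesis .
qed

lemma W_taux_index:
  assumes h: "h < H" and f: "f < F" and j: "j < card (tier h) * L"
  shows "W_taux K iota eff n L nq tier Y x h $$ (f, j)
    = (\<Sum>q<2^K. w q * (g f q * c q h $ (j div L) * fpcov n (\<lambda>i. Y i q) (\<lambda>i. x i (j mod L))))"
proof -
  have l: "j mod L < L" and r: "j div L < card (tier h)"
    using j by (cases L; simp add: less_mult_imp_div_less)+
  have dim_S: "dim_row (Sqx n L Y x q) = 1" "dim_col (Sqx n L Y x q) = L" for q
    by (simp_all add: Sqx_def)
  have "kron (outer (bvec K iota eff q) (c q h)) (Sqx n L Y x q) $$ (f, j)
      = g f q * c q h $ (j div L) * fpcov n (\<lambda>i. Y i q) (\<lambda>i. x i (j mod L))" for q
    using f j l r dim_cvec[OF h, of q] by (simp add: kron_def outer_def dim_S bvec_def Sqx_index)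
  moreover have "dim_row (kron (outer (bvec K iota eff q) (c q h)) (Sqx n L Y x q)) = F"
    "dim_col (kron (outer (bvec K iota eff q) (c q h)) (Sqx n L Y x q)) = card (tier h) * L" for q
    using dim_cvec[OF h, of q] by (simp_all add: kron_def outer_def dim_S bvec_def)
  ultimately show ?thesis
    using f j by (simp add: W_taux_def msum_def)
qed

lemma W_xx_index:
  assumes h: "h < H" and j: "j < card (tier h) * L" and j': "j' < card (tier h) * L"
  shows "W_xx K iota eff n L nq tier x h $$ (j, j')
    = (\<Sum>q<2^K. w q * (c q h $ (j div L) * c q h $ (j' div L) * fpcov n (\<lambda>i. x i (j mod L)) (\<lambda>i. x i (j' mod L))))"
proof -
  have l: "j mod L < L" "j' mod L < L" and r: "j div L < card (tier h)" "j' div L < card (tier h)"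
    using j j' by (cases L; simp add: less_mult_imp_div_less)+
  have dim_S: "dim_row (Sxx n L x) = L" "dim_col (Sxx n L x) = L"
    by (simp_all add: Sxx_def)
  have "kron (outer (c q h) (c q h)) (Sxx n L x) $$ (j, j')
      = c q h $ (j div L) * c q h $ (j' div L) * fpcov n (\<lambda>i. x i (j mod L)) (\<lambda>i. x i (j' mod L))" for q
    using j j' l r dim_cvec[OF h, of q] by (simp add: kron_def outer_def dim_S Sxx_index)
  moreover have "dim_row (kron (outer (c q h) (c q h)) (Sxx n L x)) = card (tier h) * L"
    "dim_col (kron (outer (c q h) (c q h)) (Sxx n L x)) = card (tier h) * L" for q
    using dim_cvec[OF h, of q] by (simp_all add: kron_def outer_def dim_S)
  ultimately show ?thesis
    using j j' by (simp add: W_xx_def msum_def)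
qed

lemma contrast_weight: "u / 2 ^ (K - 1) * (v / 2 ^ (K - 1)) * s / nq q = w q * (u * v * s)"
  by (simp add: mult_2 power_add)

lemma covar_tau_thetahat:
  assumes h: "h < H" and f: "f < F" and j: "j < card (tier h) * L"
  shows "covar \<Omega> (\<lambda>z. (tauhat K iota eff n nq Y z - tau K iota eff n Y) $ f)
      (\<lambda>z. thetahat K iota eff n L nq tier x h z $ j)
    = (\<Sum>q<2^K. w q * (g f q * c q h $ (j div L) * fpcov n (\<lambda>i. Y i q) (\<lambda>i. x i (j mod L))))"
proof -
  have "covar \<Omega> (\<lambda>z. (tauhat K iota eff n nq Y z - tau K iota eff n Y) $ f)
      (\<lambda>z. thetahat K iota eff n L nq tier x h z $ j)
    = covar \<Omega> (\<lambda>z. \<Sum>q<2^K. Yhat n nq (\<lambda>i q. g f q / 2^(K-1) * Y i q) z q)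
      (\<lambda>z. \<Sum>q<2^K. Yhat n nq (\<lambda>i q. c q h $ (j div L) / 2^(K-1) * x i (j mod L)) z q)"
    by (simp only: tau_error_index[OF f] thetahat_index[OF h j] covar_diff_const_left[OF finite_\<Omega> \<Omega>_nonempty])
  also have "\<dots> = (\<Sum>q<2^K. g f q / 2^(K-1) * (c q h $ (j div L) / 2^(K-1))
      * fpcov n (\<lambda>i. Y i q) (\<lambda>i. x i (j mod L)) / nq q)"
    by (rule covar_contrast_covariate[OF sum_cvec_scaled[OF h j]])
  finally show ?thesis
    by (simp only: contrast_weight)
qed

lemma covar_thetahat:
  assumes h: "h < H" and h': "h' < H" and j: "j < card (tier h) * L" and j': "j' < card (tier h') * L"
  shows "covar \<Omega> (\<lambda>z. thetahat K iota eff n L nq tier x h z $ j) (\<lambda>z. thetahat K iota eff n L nq tier x h' z $ j')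
    = (\<Sum>q<2^K. w q * (c q h $ (j div L) * c q h' $ (j' div L)
        * fpcov n (\<lambda>i. x i (j mod L)) (\<lambda>i. x i (j' mod L))))"
proof -
  have "covar \<Omega> (\<lambda>z. thetahat K iota eff n L nq tier x h z $ j) (\<lambda>z. thetahat K iota eff n L nq tier x h' z $ j')
    = covar \<Omega> (\<lambda>z. \<Sum>q<2^K. Yhat n nq (\<lambda>i q. c q h $ (j div L) / 2^(K-1) * x i (j mod L)) z q)
      (\<lambda>z. \<Sum>q<2^K. Yhat n nq (\<lambda>i q. c q h' $ (j' div L) / 2^(K-1) * x i (j' mod L)) z q)"
    by (simp only: thetahat_index[OF h j] thetahat_index[OF h' j'])
  also have "\<dots> = (\<Sum>q<2^K. c q h $ (j div L) / 2^(K-1) * (c q h' $ (j' div L) / 2^(K-1))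
      * fpcov n (\<lambda>i. x i (j mod L)) (\<lambda>i. x i (j' mod L)) / nq q)"
    by (rule covar_contrast_covariate[OF sum_cvec_scaled[OF h' j']])
  finally show ?thesis
    by (simp only: contrast_weight)
qed

lemma Cov_tau_thetahat:
  assumes h: "h < H"
  shows "Cov \<Omega> F (card (tier h) * L) (\<lambda>z. tauhat K iota eff n nq Y z - tau K iota eff n Y)
      (thetahat K iota eff n L nq tier x h)
    = W_taux K iota eff n L nq tier Y x h"
proof (rule eq_matI)
  fix f j assume "f < dim_row (W_taux K iota eff n L nq tier Y x h)"
    and "j < dim_col (W_taux K iota eff n L nq tier Y x h)"
  then have f: "f < F" and j: "j < card (tier h) * L"
    by (simp_all add: W_taux_def msum_def)
  show "Cov \<Omega> F (card (tier h) * L) (\<lambda>z. tauhat K iota eff n nq Y z - tau K iota eff n Y)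
      (thetahat K iota eff n L nq tier x h) $$ (f, j) = W_taux K iota eff n L nq tier Y x h $$ (f, j)"
    by (simp only: index_Cov[OF f j] covar_tau_thetahat[OF h f j] W_taux_index[OF h f j])
qed (simp_all add: Cov_def W_taux_def msum_def)

lemma Cov_thetahat:
  assumes h: "h < H"
  shows "Cov \<Omega> (card (tier h) * L) (card (tier h) * L)
      (thetahat K iota eff n L nq tier x h) (thetahat K iota eff n L nq tier x h)
    = W_xx K iota eff n L nq tier x h"
proof (rule eq_matI)
  fix j j' assume "j < dim_row (W_xx K iota eff n L nq tier x h)" and "j' < dim_col (W_xx K iota eff n L nq tier x h)"
  then have j: "j < card (tier h) * L" and j': "j' < card (tier h) * L"
    by (simp_all add: W_xx_def msum_def)
  show "Cov \<Omega> (card (tier h) * L) (card (tier h) * L)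
      (thetahat K iota eff n L nq tier x h) (thetahat K iota eff n L nq tier x h) $$ (j, j')
    = W_xx K iota eff n L nq tier x h $$ (j, j')"
    by (simp only: index_Cov[OF j j'] covar_thetahat[OF h h j j'] W_xx_index[OF h j j'])
qed (simp_all add: Cov_def W_xx_def msum_def)

lemma Cov_thetahat_orthogonal:
  assumes h: "h < H" and h': "h' < H" and hh': "h \<noteq> h'"
  shows "Cov \<Omega> (card (tier h) * L) (card (tier h') * L)
      (thetahat K iota eff n L nq tier x h) (thetahat K iota eff n L nq tier x h')
    = 0\<^sub>m (card (tier h) * L) (card (tier h') * L)"
proof (rule eq_matI)
  fix j j' assume "j < dim_row (0\<^sub>m (card (tier h) * L) (card (tier h') * L))"
    and "j' < dim_col (0\<^sub>m (card (tier h) * L) (card (tier h') * L))"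
  then have j: "j < card (tier h) * L" and j': "j' < card (tier h') * L"
    by simp_all
  have r: "j div L < card (tier h)" and r': "j' div L < card (tier h')"
    using j j' by (simp_all add: less_mult_imp_div_less)
  have "covar \<Omega> (\<lambda>z. thetahat K iota eff n L nq tier x h z $ j) (\<lambda>z. thetahat K iota eff n L nq tier x h' z $ j')
    = fpcov n (\<lambda>i. x i (j mod L)) (\<lambda>i. x i (j' mod L)) * (\<Sum>q<2^K. w q * c q h $ (j div L) * c q h' $ (j' div L))"
    by (simp only: covar_thetahat[OF h h' j j']) (simp add: sum_distrib_left mult_ac)
  also have "\<dots> = 0"
    using cvec_orthogonal[OF h h' hh' r r'] by simp
  finally show "Cov \<Omega> (card (tier h) * L) (card (tier h') * L)
      (thetahat K iota eff n L nq tier x h) (thetahat K iota eff n L nq tier x h') $$ (j, j')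
    = 0\<^sub>m (card (tier h) * L) (card (tier h') * L) $$ (j, j')"
    using j j' by (simp add: index_Cov)
qed (simp_all add: Cov_def)

end

theorem proposition6:
  fixes K n L H :: nat
    and iota :: "nat \<Rightarrow> nat \<Rightarrow> real"
    and eff :: "nat \<Rightarrow> nat set"
    and nq :: "nat \<Rightarrow> nat"
    and tier :: "nat \<Rightarrow> nat set"
    and Y :: "nat \<Rightarrow> nat \<Rightarrow> real"
    and x :: "nat \<Rightarrow> nat \<Rightarrow> real"
  assumes K: "K \<ge> 1"
    and iota_bij: "bij_betw (\<lambda>q. restrict (iota q) {0..<K}) {0..<2^K} ({0..<K} \<rightarrow>\<^sub>E {-1, 1})"
    and eff_bij: "bij_betw eff {0..<2^K - 1} {A. A \<subseteq> {0..<K} \<and> A \<noteq> {}}"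
    and nq_pos: "\<forall>q<2^K. nq q \<ge> 1"
    and nq_sum: "(\<Sum>q<2^K. nq q) = n"
    and tier_nonempty: "\<forall>h<H. tier h \<noteq> {}"
    and tier_disj: "\<forall>h<H. \<forall>h'<H. h \<noteq> h' \<longrightarrow> tier h \<inter> tier h' = {}"
    and tier_cover: "(\<Union>h<H. tier h) = {0..<2^K - 1}"
  shows
    "Evec (assignments n (2^K) nq) (2^K - 1 + (2^K - 1) * L)
        (\<lambda>z. (tauhat K iota eff n nq Y z - tau K iota eff n Y)
              @\<^sub>v thetahat_all K iota eff n L nq tier H x z)
      = 0\<^sub>v (2^K - 1 + (2^K - 1) * L)
     \<and> (\<forall>h<H.
          Cov (assignments n (2^K) nq) (2^K - 1) (card (tier h) * L)
              (\<lambda>z. tauhat K iota eff n nq Y z - tau K iota eff n Y)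
              (thetahat K iota eff n L nq tier x h)
            = W_taux K iota eff n L nq tier Y x h)
     \<and> (\<forall>h<H.
          Cov (assignments n (2^K) nq) (card (tier h) * L) (card (tier h) * L)
              (thetahat K iota eff n L nq tier x h) (thetahat K iota eff n L nq tier x h)
            = W_xx K iota eff n L nq tier x h)
     \<and> (\<forall>h<H. \<forall>h'<H. h \<noteq> h' \<longrightarrow>
          Cov (assignments n (2^K) nq) (card (tier h) * L) (card (tier h') * L)
              (thetahat K iota eff n L nq tier x h) (thetahat K iota eff n L nq tier x h')
            = 0\<^sub>m (card (tier h) * L) (card (tier h') * L))"
proof -
  have "(2::nat) \<le> 2 ^ K"
    using power_increasing[OF K, of "2::nat"] by simp
  also have "\<dots> = (\<Sum>q<(2::nat)^K. 1::nat)"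
    by simp
  also have "\<dots> \<le> (\<Sum>q<2^K. nq q)"
    using nq_pos by (intro sum_mono) simp
  also have "\<dots> = n"
    by (rule nq_sum)
  finally have two_units: "n \<ge> 2" .
  interpret tiered_crfe n K nq iota eff tier H
  proof unfold_locales
    show "\<And>h. h < H \<Longrightarrow> tier h \<subseteq> {0..<2^K - 1}"
      using tier_cover by blast
  qed (use two_units iota_bij eff_bij nq_pos nq_sum in auto)
  have dims: "(\<Sum>h\<leftarrow>[0..<H]. card (tier h) * L) = (2^K - 1) * L"
    by (rule sum_list_card_tiers) (use tier_disj tier_cover in auto)
  have "Evec (assignments n (2^K) nq) (2^K - 1 + (2^K - 1) * L)
      (\<lambda>z. (tauhat K iota eff n nq Y z - tau K iota eff n Y) @\<^sub>v thetahat_all K iota eff n L nq tier H x z)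
    = 0\<^sub>v (2^K - 1 + (2^K - 1) * L)"
    using Evec_errors[where Y = Y and L = L and x = x] by (simp only: dims)
  then show ?thesis
    using Cov_tau_thetahat Cov_thetahat Cov_thetahat_orthogonal by blast
qed

end
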